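(* Let $A$ be a random matrix with law $\mu$, where $\mu$ is as in the context and satisfies Conditions (C1), (C2), $\int\log_+\mathcal{N}(a)\,d\mu(a)<\infty$, $1\in I_\mu$, and $r(\mathbb{E}A)>e^\gamma$. Then for every $R>0$ there exist an integer $K>0$ and $a_1,\dots,a_K\in\mathrm{supp}(\mu)$ such that $g:=a_1\cdots a_K>0$ and $r(g)\ge R\,(r(\mathbb{E}A))^K$.
   Context: Notation: $G$ is the set of $d\times d$ nonnegative matrices; $|x|=\sum_i|x_i|$; $\|a\|$ operator norm, $r(a)$ spectral radius; $a>0$ means all entries strictly positive; $\mathbb{S}_+^{d-1}=\{x\in\mathbb{R}_+^d:|x|=1\}$; $\iota(a)=\inf_{x\in\mathbb{S}_+^{d-1}}|ax|$; $\mathcal{N}(a)=\max\{\|a\|,\iota(a)^{-1}\}$; $\log_+y=\max(\log y,0)$. Setting: random $A_i\in G$, $N=\#\{i:A_i\ne0\}<\infty$ a.s., $A_i\ne0$ iff $i\le N$; $\mu$: probability on $G$ with $\int f\,d\mu=\mathbb{E}[\sum_{i\le N}f(A_i)]/\mathbb{E}[N]$; $\Gamma$: multiplicative semigroup (with identity) generated by $\mathrm{supp}(\mu)$. $(M_i)$ i.i.d. of law $\mu$, $G_n=M_1\cdots M_n$, $\gamma=\lim_n\frac1n\mathbb{E}[\log\|G_n\|]$; $I_\mu=\{s\ge0:\int\|a\|^sd\mu<\infty\}$. (C1) $N\ge1$ a.s., $\mathbb{E}[N]\in(1,\infty)$, $A_i\in G$, $A_i\ne0$ iff $i\le N$. (C2)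 Every $a\in\Gamma$ has a strictly positive entry in each row and column; $\Gamma$ contains a strictly positive matrix. *)

theory Defs
  imports "HOL-Probability.Probability"
begin

type_synonym 'd mat = "real ^ 'd ^ 'd"

definition nonneg_mat :: "('d::finite) mat \<Rightarrow> bool" where
  "nonneg_mat a \<longleftrightarrow> (\<forall>i j. a $ i $ j \<ge> 0)"

definition pos_mat :: "('d::finite) mat \<Rightarrow> bool" where
  "pos_mat a \<longleftrightarrow> (\<forall>i j. a $ i $ j > 0)"

definition l1 :: "real ^ ('d::finite) \<Rightarrow> real" where
  "l1 x = (\<Sum>i\<in>UNIV. \<bar>x $ i\<bar>)"

definition opnorm1 :: "('d::finite) mat \<Rightarrow> real" where
  "opnorm1 a = Sup {l1 (a *v x) | x. l1 x = 1}"

definition iota :: "('d::finite) mat \<Rightarrow> real" where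
  "iota a = Inf {l1 (a *v x) | x. (\<forall>i. x $ i \<ge> 0) \<and> l1 x = 1}"

text \<open>log_+ N(a), with N(a) = max(||a||, iota(a)^-1), and iota(a)^-1 = infinity when iota(a) = 0.\<close>
definition logplus_N :: "('d::finite) mat \<Rightarrow> ennreal" where
  "logplus_N a = (if iota a = 0 then \<infinity>
      else ennreal (max 0 (ln (max (opnorm1 a) (inverse (iota a))))))"

definition is_eigenvalue :: "('d::finite) mat \<Rightarrow> complex \<Rightarrow> bool" where
  "is_eigenvalue a l \<longleftrightarrow> (\<exists>v :: complex ^ 'd. v \<noteq> 0 \<and>
      (\<chi> i. \<Sum>j\<in>UNIV. complex_of_real (a $ i $ j) * v $ j) = l *s v)"

definition spec_rad :: "('d::finite) mat \<Rightarrow> real" where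
  "spec_rad a = Sup {cmod l | l. is_eigenvalue a l}"

definition mprod :: "('d::finite) mat list \<Rightarrow> 'd mat" where
  "mprod as = foldr (**) as (mat 1)"

definition msupp :: "('d::finite) mat measure \<Rightarrow> 'd mat set" where
  "msupp \<mu> = {a. \<forall>e>0. emeasure \<mu> (ball a e) > 0}"

definition gen_semigroup :: "('d::finite) mat set \<Rightarrow> 'd mat set" where
  "gen_semigroup S = {mprod as | as. set as \<subseteq> S}"

definition cond_C2 :: "('d::finite) mat measure \<Rightarrow> bool" where
  "cond_C2 \<mu> \<longleftrightarrow>
     (\<forall>a\<in>gen_semigroup (msupp \<mu>). (\<forall>i. \<exists>j. a $ i $ j > 0) \<and> (\<forall>j. \<exists>i. a $ i $ j > 0))
   \<and> (\<exists>a\<in>gen_semigroup (msupp \<mu>). pos_mat a)"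

text \<open>Lyapunov exponent: gamma = lim (1/n) E log ||M_1 ... M_n|| with M_i iid of law mu,
  expressed via the n-fold product measure.\<close>
definition lyap :: "('d::finite) mat measure \<Rightarrow> real" where
  "lyap \<mu> = lim (\<lambda>n. (\<integral>m. ln (opnorm1 (mprod (map m [0..<n]))) \<partial>(PiM {0..<n} (\<lambda>_. \<mu>))) / real n)"

end

theory Submission
  imports Defs "HOL-Computational_Algebra.Fundamental_Theorem_Algebra"
begin

text \<open>Let \<open>r\<close> be the spectral radius of the mean \<open>E A\<close> and suppose, for a
  contradiction, that for some \<open>R\<close> every positive product \<open>g\<close> of \<open>K\<close> matrices
  from the support has \<open>r(g) < R r^K\<close>. Sandwiching an arbitrary product \<open>h\<close> of
  \<open>K\<close> such matrices between two copies of a fixed positive product turns this into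
  the upper bound \<open>\<parallel>h\<parallel> \<le> C r^K\<close>.

  For a matching lower bound take \<open>z \<ge> 0\<close> with \<open>E A z \<ge> r z\<close> and let
  \<open>F y\<close> be the supremum of the normalized masses \<open>|h y| / r^K\<close> over products
  \<open>h\<close> of \<open>K\<close> matrices from the support; the upper bound makes \<open>F\<close> finite and
  Lipschitz. Applying one more factor from the support multiplies \<open>F\<close> by at most
  \<open>r\<close>, and by Jensen by at least \<open>r\<close> on average, so by continuity by exactly
  \<open>r\<close> everywhere on the support. At \<open>z\<close> this gives \<open>\<parallel>h\<parallel> \<ge> r^K / C\<close>.

  Hence \<open>\<parallel>M\<^sub>1 \<cdots> M\<^sub>n\<parallel>\<close> stays within a constant factor of \<open>r^n\<close> almost
  surely, so \<open>\<gamma> = log r\<close>, contradicting \<open>r > e^\<gamma>\<close>.\<close>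

section \<open>The l1 operator norm and nonnegative matrices\<close>

lemma mprod_Nil [simp]: "mprod [] = mat 1"
  by (simp add: mprod_def)

lemma mprod_Cons [simp]: "mprod (x # xs) = x ** mprod xs"
  by (simp add: mprod_def)

lemma mprod_append: "mprod (xs @ ys) = mprod xs ** mprod ys"
  by (induction xs) (simp_all add: matrix_mul_assoc)

lemma mprod_snoc: "mprod (xs @ [x]) = mprod xs ** x"
  by (simp add: mprod_append)

definition col_abs_sum :: "('d::finite) mat \<Rightarrow> 'd \<Rightarrow> real" where
  "col_abs_sum a j = (\<Sum>i\<in>UNIV. \<bar>a $ i $ j\<bar>)"

lemma l1_nonneg: "l1 x \<ge> 0"
  unfolding l1_def by (simp add: sum_nonneg)

lemma abs_component_le_l1: "\<bar>x $ i\<bar> \<le> l1 x"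
  unfolding l1_def by (rule member_le_sum) auto

lemma l1_axis [simp]: "l1 (axis j (1::real)) = 1"
  by (simp add: l1_def axis_def)

lemma l1_matrix_vector_axis: "l1 (a *v axis j 1) = col_abs_sum a j"
  by (simp add: l1_def col_abs_sum_def matrix_vector_mult_basis column_def)

lemma l1_le_norm: "l1 (x :: real ^ ('d::finite)) \<le> real CARD('d) * norm x"
proof -
  have "l1 x \<le> (\<Sum>i\<in>(UNIV::'d set). norm x)"
    unfolding l1_def by (intro sum_mono) (rule component_le_norm_cart)
  then show ?thesis by simp
qed

lemma l1_matrix_vector_le_col_bound:
  assumes "\<And>j. col_abs_sum a j \<le> c"
  shows "l1 (a *v x) \<le> c * l1 x"
proof -
  have "l1 (a *v x) = (\<Sum>i\<in>UNIV. \<bar>\<Sum>j\<in>UNIV. a $ i $ j * x $ j\<bar>)"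
    by (simp add: l1_def matrix_vector_mult_def)
  also have "\<dots> \<le> (\<Sum>i\<in>UNIV. \<Sum>j\<in>UNIV. \<bar>a $ i $ j\<bar> * \<bar>x $ j\<bar>)"
    by (intro sum_mono) (metis (no_types, lifting) abs_mult sum.cong sum_abs)
  also have "\<dots> = (\<Sum>j\<in>UNIV. col_abs_sum a j * \<bar>x $ j\<bar>)"
    by (subst sum.swap) (simp add: col_abs_sum_def sum_distrib_right)
  also have "\<dots> \<le> (\<Sum>j\<in>UNIV. c * \<bar>x $ j\<bar>)"
    by (intro sum_mono mult_right_mono assms) auto
  also have "\<dots> = c * l1 x"
    by (simp add: l1_def sum_distrib_left)
  finally show ?thesis .
qed

lemma opnorm1_eq_Max_col_abs_sum: "opnorm1 a = Max (range (col_abs_sum a))"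
proof -
  let ?c = "Max (range (col_abs_sum a))"
  have "?c \<in> range (col_abs_sum a)"
    by (rule Max_in) auto
  then obtain j where j: "?c = col_abs_sum a j"
    by blast
  show ?thesis
    unfolding opnorm1_def
  proof (rule cSup_eq_maximum)
    show "?c \<in> {l1 (a *v x) |x. l1 x = 1}"
      using j l1_matrix_vector_axis[of a j] by (auto intro!: exI[of _ "axis j 1"])
    have "col_abs_sum a i \<le> ?c" for i
      by (rule Max_ge) auto
    then have le: "l1 (a *v x) \<le> ?c * l1 x" for x
      by (rule l1_matrix_vector_le_col_bound)
    show "y \<le> ?c" if "y \<in> {l1 (a *v x) |x. l1 x = 1}" for y
    proof -
      from that obtain x where "y = l1 (a *v x)" "l1 x = 1"
        by blast
      with le[of x] show ?thesis
        by simp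
    qed
  qed
qed

lemma col_abs_sum_le_opnorm1: "col_abs_sum a j \<le> opnorm1 a"
  unfolding opnorm1_eq_Max_col_abs_sum by (rule Max_ge) auto

lemma ex_col_abs_sum_eq_opnorm1: "\<exists>j. opnorm1 a = col_abs_sum a j"
proof -
  have "Max (range (col_abs_sum a)) \<in> range (col_abs_sum a)"
    by (rule Max_in) auto
  then show ?thesis
    unfolding opnorm1_eq_Max_col_abs_sum by (metis rangeE)
qed

lemma opnorm1_nonneg: "opnorm1 a \<ge> 0"
  by (rule order_trans[OF _ col_abs_sum_le_opnorm1[of a undefined]]) (simp add: col_abs_sum_def sum_nonneg)

lemma l1_matrix_vector_le: "l1 (a *v x) \<le> opnorm1 a * l1 x"
  by (rule l1_matrix_vector_le_col_bound) (rule col_abs_sum_le_opnorm1)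

lemma opnorm1_mat_1 [simp]: "opnorm1 (mat 1 :: ('d::finite) mat) = 1"
proof -
  have "col_abs_sum (mat 1 :: 'd mat) j = 1" for j
    unfolding col_abs_sum_def mat_def by (simp add: sum.delta)
  then show ?thesis
    unfolding opnorm1_eq_Max_col_abs_sum by simp
qed

lemma norm_le_opnorm1: "norm (a :: ('d::finite) mat) \<le> real CARD('d) * opnorm1 a"
proof -
  have "norm a \<le> (\<Sum>i\<in>UNIV. norm (a $ i))"
    unfolding norm_vec_def by (rule L2_set_le_sum) auto
  also have "\<dots> \<le> (\<Sum>i\<in>UNIV. \<Sum>j\<in>UNIV. \<bar>a $ i $ j\<bar>)"
    by (intro sum_mono norm_le_l1_cart)
  also have "\<dots> = (\<Sum>j\<in>UNIV. col_abs_sum a j)"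
    by (subst sum.swap) (simp add: col_abs_sum_def)
  also have "\<dots> \<le> (\<Sum>j\<in>(UNIV::'d set). opnorm1 a)"
    by (intro sum_mono col_abs_sum_le_opnorm1)
  finally show ?thesis by simp
qed

lemma opnorm1_le_norm: "opnorm1 (a :: ('d::finite) mat) \<le> real CARD('d) * norm a"
proof -
  obtain j where j: "opnorm1 a = col_abs_sum a j"
    using ex_col_abs_sum_eq_opnorm1 by blast
  have "\<bar>a $ i $ j\<bar> \<le> norm a" for i
    using component_le_norm_cart[of "a $ i" j] Finite_Cartesian_Product.norm_nth_le[of a i]
    by linarith
  then have "col_abs_sum a j \<le> (\<Sum>i\<in>(UNIV::'d set). norm a)"
    unfolding col_abs_sum_def by (intro sum_mono)
  then show ?thesis using j by simp
qed

lemma opnorm1_triangle: "opnorm1 (a + b) \<le> opnorm1 a + opnorm1 b"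
proof -
  obtain j where j: "opnorm1 (a + b) = col_abs_sum (a + b) j"
    using ex_col_abs_sum_eq_opnorm1 by blast
  have "col_abs_sum (a + b) j \<le> col_abs_sum a j + col_abs_sum b j"
    unfolding col_abs_sum_def sum.distrib[symmetric] by (intro sum_mono) (simp add: abs_triangle_ineq)
  then show ?thesis
    using j col_abs_sum_le_opnorm1[of a j] col_abs_sum_le_opnorm1[of b j] by linarith
qed

lemma lipschitz_on_opnorm1: "(real CARD('d))-lipschitz_on UNIV (opnorm1 :: ('d::finite) mat \<Rightarrow> real)"
proof (rule lipschitz_onI)
  fix a b :: "'d mat"
  have "opnorm1 a - opnorm1 b \<le> real CARD('d) * norm (a - b)"
    using opnorm1_triangle[of b "a - b"] opnorm1_le_norm[of "a - b"] by simp
  moreover have "opnorm1 b - opnorm1 a \<le> real CARD('d) * norm (a - b)"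
    using opnorm1_triangle[of a "b - a"] opnorm1_le_norm[of "b - a"] by (simp add: norm_minus_commute)
  ultimately show "dist (opnorm1 a) (opnorm1 b) \<le> real CARD('d) * dist a b"
    by (simp add: dist_norm abs_le_iff)
qed simp

lemma continuous_on_opnorm1: "continuous_on UNIV (opnorm1 :: ('d::finite) mat \<Rightarrow> real)"
  by (rule lipschitz_on_continuous_on[OF lipschitz_on_opnorm1])

lemma nonneg_mat_mult: "nonneg_mat a \<Longrightarrow> nonneg_mat b \<Longrightarrow> nonneg_mat (a ** b)"
  unfolding nonneg_mat_def matrix_matrix_mult_def by (auto intro!: sum_nonneg)

lemma nonneg_mat_mat_1: "nonneg_mat (mat 1)"
  unfolding nonneg_mat_def mat_def by auto

lemma nonneg_mat_mprod: "(\<And>a. a \<in> set as \<Longrightarrow> nonneg_mat a) \<Longrightarrow> nonneg_mat (mprod as)"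
  by (induction as) (auto intro: nonneg_mat_mult nonneg_mat_mat_1)

lemma closed_nonneg_mat: "closed (Collect nonneg_mat :: ('d::finite) mat set)"
proof -
  have "Collect nonneg_mat = (\<Inter>i. \<Inter>j. {a :: 'd mat. 0 \<le> a $ i $ j})"
    by (auto simp: nonneg_mat_def)
  then show ?thesis
    by (simp add: closed_INT closed_Collect_le continuous_on_component)
qed

lemma matrix_vector_mono:
  "nonneg_mat a \<Longrightarrow> (\<And>i. x $ i \<le> y $ i) \<Longrightarrow> (a *v x) $ i \<le> (a *v y) $ i"
  unfolding nonneg_mat_def matrix_vector_mult_def by (auto intro!: sum_mono mult_left_mono)

lemma opnorm1_nonneg_mat_le_entry_sum:
  assumes "nonneg_mat a"
  shows "opnorm1 a \<le> (\<Sum>i\<in>UNIV. \<Sum>j\<in>UNIV. a $ i $ j)"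
proof -
  obtain j where "opnorm1 a = col_abs_sum a j"
    using ex_col_abs_sum_eq_opnorm1 by blast
  also have "\<dots> = (\<Sum>i\<in>UNIV. a $ i $ j)"
    using assms by (simp add: col_abs_sum_def nonneg_mat_def)
  also have "\<dots> \<le> (\<Sum>i\<in>UNIV. \<Sum>j\<in>UNIV. a $ i $ j)"
    using assms by (intro sum_mono member_le_sum) (auto simp: nonneg_mat_def)
  finally show ?thesis .
qed

definition coord_sum :: "real ^ ('d::finite) \<Rightarrow> real" where
  "coord_sum x = (\<Sum>i\<in>UNIV. x $ i)"

lemma l1_eq_coord_sum: "(\<And>i. x $ i \<ge> 0) \<Longrightarrow> l1 x = coord_sum x"
  unfolding l1_def coord_sum_def by simp

lemma coord_sum_le_l1: "coord_sum x \<le> l1 x"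
  unfolding l1_def coord_sum_def by (intro sum_mono) auto

lemma abs_coord_sum_le_l1: "\<bar>coord_sum x\<bar> \<le> l1 x"
  unfolding l1_def coord_sum_def by (rule sum_abs)

lemma coord_sum_add: "coord_sum (x + y) = coord_sum x + coord_sum y"
  by (simp add: coord_sum_def sum.distrib)

lemma coord_sum_diff: "coord_sum (x - y) = coord_sum x - coord_sum y"
  by (simp add: coord_sum_def sum_subtractf)

lemma coord_sum_scaleR: "coord_sum (c *\<^sub>R x) = c * coord_sum x"
  by (simp add: coord_sum_def sum_distrib_left)

section \<open>Eigenvalues and the spectral radius\<close>

definition char_matrix :: "('d::finite) mat \<Rightarrow> complex \<Rightarrow> complex ^ 'd ^ 'd" where
  "char_matrix B l = (\<chi> i j. complex_of_real (B $ i $ j) - (if i = j then l else 0))"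

lemma char_matrix_mult_vector:
  "char_matrix B l *v v = (\<chi> i. \<Sum>j\<in>UNIV. complex_of_real (B $ i $ j) * v $ j) - l *s v"
proof -
  have "(\<Sum>j\<in>UNIV. (complex_of_real (B $ i $ j) - (if i = j then l else 0)) * v $ j)
      = (\<Sum>j\<in>UNIV. complex_of_real (B $ i $ j) * v $ j - (if i = j then l * v $ j else 0))" for i
    by (intro sum.cong) (auto simp: algebra_simps)
  then show ?thesis
    by (simp add: vec_eq_iff char_matrix_def matrix_vector_mult_def sum_subtractf)
qed

lemma is_eigenvalue_iff_det: "is_eigenvalue B l \<longleftrightarrow> det (char_matrix B l) = 0"
proof -
  let ?f = "(*v) (char_matrix B l)"
  have "det (char_matrix B l) \<noteq> 0 \<longleftrightarrow> inj ?f"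
    using det_nz_iff_inj_gen[of ?f] by simp
  also have "inj ?f \<longleftrightarrow> (\<forall>v. ?f v = 0 \<longrightarrow> v = 0)"
    by (rule linear_inj_iff_eq_0) simp
  finally show ?thesis
    unfolding is_eigenvalue_def char_matrix_mult_vector by auto
qed

definition char_entry_poly :: "('d::finite) mat \<Rightarrow> 'd \<Rightarrow> 'd \<Rightarrow> complex poly" where
  "char_entry_poly B i j = [:complex_of_real (B $ i $ j):] - (if i = j then [:0, 1:] else 0)"

definition charpoly :: "('d::finite) mat \<Rightarrow> complex poly" where
  "charpoly B = (\<Sum>p\<in>{p. p permutes (UNIV::'d set)}.
      smult (of_int (sign p)) (\<Prod>i\<in>UNIV. char_entry_poly B i (p i)))"

lemma poly_charpoly: "poly (charpoly B) l = det (char_matrix B l)"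
proof -
  have "poly (char_entry_poly B i j) l = char_matrix B l $ i $ j" for i j
    by (simp add: char_entry_poly_def char_matrix_def)
  then show ?thesis
    by (simp add: charpoly_def det_def poly_sum poly_prod)
qed

lemma coeff_charpoly_CARD: "coeff (charpoly (B :: ('d::finite) mat)) CARD('d) = (-1) ^ CARD('d)"
proof -
  let ?P = "{p. p permutes (UNIV::'d set)}"
  let ?c = "\<lambda>p. coeff (\<Prod>i\<in>UNIV. char_entry_poly B i (p i)) CARD('d)"
  have degree_entry: "degree (char_entry_poly B i j) \<le> (if i = j then 1 else 0)" for i j
    by (auto simp: char_entry_poly_def intro: order.trans[OF degree_diff_le])
  have off_diagonal: "?c p = 0" if p: "p \<in> ?P - {id}" for p
  proof -
    obtain k where k: "p k \<noteq> k"
      using p by (metis DiffE eq_id_iff singletonI)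
    have "degree (\<Prod>i\<in>UNIV. char_entry_poly B i (p i)) \<le> (\<Sum>i\<in>UNIV. degree (char_entry_poly B i (p i)))"
      using degree_prod_sum_le[of UNIV "\<lambda>i. char_entry_poly B i (p i)"] by (simp add: o_def)
    also have "\<dots> = degree (char_entry_poly B k (p k)) + (\<Sum>i\<in>UNIV - {k}. degree (char_entry_poly B i (p i)))"
      by (simp add: sum.remove)
    also have "\<dots> \<le> 0 + (\<Sum>i\<in>UNIV - {k}. 1)"
      using degree_entry[of k "p k"] k
      by (intro add_mono sum_mono) (auto intro: order.trans[OF degree_entry])
    also have "\<dots> < CARD('d)"
      by (simp add: card_Diff_singleton)
    finally show ?thesis
      by (intro coeff_eq_0) simp
  qed
  have diagonal: "coeff (\<Prod>i\<in>UNIV. char_entry_poly B i i) CARD('d) = (-1) ^ CARD('d)"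
  proof -
    have entry: "char_entry_poly B i i = [:complex_of_real (B $ i $ i), -1:]" for i
      by (simp add: char_entry_poly_def)
    have "degree (\<Prod>i\<in>(UNIV::'d set). char_entry_poly B i i) = CARD('d)"
      by (subst degree_prod_eq_sum_degree) (auto simp: entry)
    moreover have "lead_coeff (\<Prod>i\<in>(UNIV::'d set). char_entry_poly B i i) = (-1) ^ CARD('d)"
      by (simp add: lead_coeff_prod entry)
    ultimately show ?thesis
      by simp
  qed
  have "coeff (charpoly B) CARD('d) = (\<Sum>p\<in>?P. of_int (sign p) * ?c p)"
    by (simp add: charpoly_def coeff_sum)
  also have "\<dots> = of_int (sign (id :: 'd \<Rightarrow> 'd)) * ?c id + (\<Sum>p\<in>?P - {id}. of_int (sign p) * ?c p)"
    by (rule sum.remove) (simp_all add: finite_permutations permutes_id)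
  also have "\<dots> = (-1) ^ CARD('d)"
    by (simp add: off_diagonal diagonal sign_id)
  finally show ?thesis .
qed

lemma eigenvalues_eq_roots_charpoly: "{l. is_eigenvalue B l} = {l. poly (charpoly B) l = 0}"
  by (simp add: is_eigenvalue_iff_det poly_charpoly)

lemma finite_eigenvalues: "finite {l. is_eigenvalue B l}"
proof -
  have "charpoly B \<noteq> 0"
    using coeff_charpoly_CARD[of B] by auto
  then show ?thesis
    by (simp add: eigenvalues_eq_roots_charpoly poly_roots_finite)
qed

lemma ex_eigenvalue: "\<exists>l. is_eigenvalue (B :: ('d::finite) mat) l"
proof -
  have "degree (charpoly B) \<ge> CARD('d)"
    using coeff_charpoly_CARD[of B] by (auto intro: le_degree)
  moreover have "0 < CARD('d)"
    by simp
  ultimately have "degree (charpoly B) \<noteq> 0"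
    by linarith
  then have "\<not> constant (poly (charpoly B))"
    by (simp add: constant_degree)
  then obtain z where "poly (charpoly B) z = 0"
    using fundamental_theorem_of_algebra by blast
  then show ?thesis
    using eigenvalues_eq_roots_charpoly[of B] by blast
qed

lemma cmod_le_spec_rad: "is_eigenvalue B l \<Longrightarrow> cmod l \<le> spec_rad B"
  unfolding spec_rad_def
  by (rule cSup_upper) (auto simp: setcompr_eq_image intro!: bdd_above_finite finite_eigenvalues)

lemma ex_eigenvalue_cmod_eq_spec_rad: "\<exists>l. is_eigenvalue B l \<and> cmod l = spec_rad B"
proof -
  let ?E = "cmod ` {l. is_eigenvalue B l}"
  have "finite ?E" "?E \<noteq> {}"
    using finite_eigenvalues ex_eigenvalue by auto
  then have "Sup ?E \<in> ?E"
    by (simp add: cSup_eq_Max)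
  moreover have "Sup ?E = spec_rad B"
    unfolding spec_rad_def by (simp add: setcompr_eq_image)
  ultimately show ?thesis
    by auto
qed

text \<open>The moduli of an eigenvector for an eigenvalue of maximal modulus form a
  sub-eigenvector: a weak form of the Perron--Frobenius theorem.\<close>

lemma nonneg_mat_ex_sub_eigenvector:
  fixes B :: "('d::finite) mat"
  assumes B: "nonneg_mat B"
  shows "\<exists>z. (\<forall>i. z $ i \<ge> 0) \<and> z \<noteq> 0 \<and> (\<forall>i. spec_rad B * z $ i \<le> (B *v z) $ i)"
proof -
  obtain l where l: "is_eigenvalue B l" "cmod l = spec_rad B"
    using ex_eigenvalue_cmod_eq_spec_rad by blast
  then obtain v :: "complex ^ 'd" where v: "v \<noteq> 0"
    "(\<chi> i. \<Sum>j\<in>UNIV. complex_of_real (B $ i $ j) * v $ j) = l *s v"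
    unfolding is_eigenvalue_def by blast
  define z where "z = (\<chi> i. cmod (v $ i))"
  have "z \<noteq> 0"
    using v(1) by (auto simp: z_def vec_eq_iff)
  moreover have "spec_rad B * z $ i \<le> (B *v z) $ i" for i
  proof -
    have "spec_rad B * z $ i = cmod ((l *s v) $ i)"
      using l(2) by (simp add: z_def norm_mult)
    also have "\<dots> = cmod (\<Sum>j\<in>UNIV. complex_of_real (B $ i $ j) * v $ j)"
      using arg_cong[OF v(2), of "\<lambda>w. w $ i"] by simp
    also have "\<dots> \<le> (\<Sum>j\<in>UNIV. cmod (complex_of_real (B $ i $ j) * v $ j))"
      by (rule norm_sum)
    also have "\<dots> = (B *v z) $ i"
      using B by (simp add: matrix_vector_mult_def z_def norm_mult nonneg_mat_def)
    finally show ?thesis .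
  qed
  moreover have "\<forall>i. z $ i \<ge> 0"
    by (simp add: z_def)
  ultimately show ?thesis
    by blast
qed

definition std_simplex :: "(real ^ ('d::finite)) set" where
  "std_simplex = {x. (\<forall>i. 0 \<le> x $ i) \<and> coord_sum x = 1}"

lemma compact_std_simplex: "compact (std_simplex :: (real ^ ('d::finite)) set)"
  unfolding compact_eq_bounded_closed
proof
  have "norm x \<le> 1" if "x \<in> std_simplex" for x :: "real ^ 'd"
    using that norm_le_l1_cart[of x] by (simp add: std_simplex_def coord_sum_def)
  then show "bounded (std_simplex :: (real ^ 'd) set)"
    by (auto simp: bounded_iff)
  have "std_simplex = (\<Inter>i. {x :: real ^ 'd. 0 \<le> x $ i}) \<inter> {x. coord_sum x = 1}"
    by (auto simp: std_simplex_def)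
  moreover have "closed {x :: real ^ 'd. coord_sum x = 1}"
    unfolding coord_sum_def by (intro closed_Collect_eq continuous_intros)
  moreover have "closed (\<Inter>i. {x :: real ^ 'd. 0 \<le> x $ i})"
    by (intro closed_INT ballI closed_Collect_le continuous_intros)
  ultimately show "closed (std_simplex :: (real ^ 'd) set)"
    by (metis closed_Int)
qed

lemma convex_std_simplex: "convex (std_simplex :: (real ^ ('d::finite)) set)"
  unfolding convex_def std_simplex_def by (auto simp: coord_sum_add coord_sum_scaleR)

lemma is_eigenvalue_of_real:
  assumes "x \<noteq> 0" and eigen: "B *v x = lam *\<^sub>R x"
  shows "is_eigenvalue B (complex_of_real lam)"
proof -
  define v where "v = (\<chi> i. complex_of_real (x $ i))"
  have "v \<noteq> 0"
    using assms(1) by (auto simp: v_def vec_eq_iff)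
  moreover have "(\<chi> i. \<Sum>j\<in>UNIV. complex_of_real (B $ i $ j) * v $ j) = complex_of_real lam *s v"
  proof -
    have "(\<Sum>j\<in>UNIV. complex_of_real (B $ i $ j) * v $ j) = complex_of_real ((B *v x) $ i)" for i
      by (simp add: v_def matrix_vector_mult_def)
    then show ?thesis
      using eigen by (simp add: vec_eq_iff v_def)
  qed
  ultimately show ?thesis
    unfolding is_eigenvalue_def by blast
qed

lemma matrix_vector_std_simplex_ge:
  assumes x: "x \<in> std_simplex" and B: "\<And>j. c \<le> B $ i $ j"
  shows "c \<le> (B *v x) $ i"
proof -
  have "c = (\<Sum>j\<in>UNIV. c * x $ j)"
    using x by (simp add: std_simplex_def coord_sum_def sum_distrib_left[symmetric])
  also have "\<dots> \<le> (\<Sum>j\<in>UNIV. B $ i $ j * x $ j)"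
    using x B by (intro sum_mono mult_right_mono) (auto simp: std_simplex_def)
  finally show ?thesis
    by (simp add: matrix_vector_mult_def)
qed

text \<open>Brouwer's theorem applied to the normalized map \<open>x \<mapsto> B x / |B x|\<close> on the
  standard simplex yields a nonnegative eigenvector, whose eigenvalue is at least the
  smallest entry of \<open>B\<close>.\<close>

lemma spec_rad_ge_entry_bound:
  fixes B :: "('d::finite) mat"
  assumes c: "c > 0" and B: "\<And>i j. c \<le> B $ i $ j"
  shows "c \<le> spec_rad B"
proof -
  let ?S = "std_simplex :: (real ^ 'd) set"
  have entry: "c \<le> (B *v x) $ i" if "x \<in> ?S" for x i
    using matrix_vector_std_simplex_ge[OF that B] .
  have total: "c \<le> coord_sum (B *v x)" if "x \<in> ?S" for x
  proof -
    have "c \<le> (B *v x) $ undefined"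
      using entry[OF that] .
    also have "\<dots> \<le> coord_sum (B *v x)"
      unfolding coord_sum_def
      by (rule member_le_sum) (use entry[OF that] c in \<open>auto intro: order.trans[OF less_imp_le]\<close>)
    finally show ?thesis .
  qed
  define f where "f x = inverse (coord_sum (B *v x)) *\<^sub>R (B *v x)" for x
  have "continuous_on ?S f"
    unfolding f_def coord_sum_def
    by (intro continuous_intros) (use total c in \<open>force simp: coord_sum_def\<close>)
  moreover have "f \<in> ?S \<rightarrow> ?S"
  proof
    fix x assume x: "x \<in> ?S"
    show "f x \<in> ?S"
      unfolding std_simplex_def f_def using total[OF x] entry[OF x] c
      by (auto simp: coord_sum_scaleR intro!: mult_nonneg_nonneg intro: order.trans[OF less_imp_le])
  qed
  moreover have "axis undefined 1 \<in> ?S"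
    by (simp add: std_simplex_def coord_sum_def axis_def)
  ultimately obtain x where x: "x \<in> ?S" "f x = x"
    using brouwer[OF compact_std_simplex convex_std_simplex] by blast
  define lam where "lam = coord_sum (B *v x)"
  have lam: "c \<le> lam"
    using total[OF x(1)] by (simp add: lam_def)
  have "B *v x = lam *\<^sub>R f x"
    using lam c by (simp add: f_def lam_def)
  then have "B *v x = lam *\<^sub>R x"
    using x(2) by simp
  moreover have "x \<noteq> 0"
    using x(1) by (auto simp: std_simplex_def coord_sum_def)
  ultimately have "cmod (complex_of_real lam) \<le> spec_rad B"
    by (intro cmod_le_spec_rad is_eigenvalue_of_real)
  then show ?thesis
    using lam c by simp
qed

section \<open>The support of a Borel measure\<close>

lemma Compl_msupp_eq_Union_null_balls:
  assumes "sets \<mu> = sets borel"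
  shows "- msupp \<mu> = \<Union>{ball a e |a e. emeasure \<mu> (ball a e) = 0}"
proof (intro equalityI subsetI)
  fix x assume "x \<in> - msupp \<mu>"
  then obtain e where "e > 0" "emeasure \<mu> (ball x e) = 0"
    by (auto simp: msupp_def not_less)
  then show "x \<in> \<Union>{ball a e |a e. emeasure \<mu> (ball a e) = 0}"
    by (auto intro!: exI[of _ "ball x e"])
next
  fix y assume "y \<in> \<Union>{ball a e |a e. emeasure \<mu> (ball a e) = 0}"
  then obtain a e where y: "y \<in> ball a e" and null: "emeasure \<mu> (ball a e) = 0"
    by blast
  have "ball y (e - dist a y) \<subseteq> ball a e"
    by (simp add: ball_subset_ball_iff dist_commute)
  then have "emeasure \<mu> (ball y (e - dist a y)) = 0"
    using emeasure_mono[of _ "ball a e" \<mu>] null assms by (simp add: le_zero_eq)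
  moreover have "e - dist a y > 0"
    using y by simp
  ultimately show "y \<in> - msupp \<mu>"
    by (auto simp: msupp_def intro!: exI[of _ "e - dist a y"])
qed

lemma Compl_msupp_null:
  assumes sets: "sets \<mu> = sets borel"
  shows "- msupp \<mu> \<in> null_sets \<mu>"
proof -
  let ?F = "{ball a e |a e. emeasure \<mu> (ball a e) = 0}"
  obtain F' where F': "F' \<subseteq> ?F" "countable F'" "\<Union>F' = \<Union>?F"
    by (rule Lindelof[of ?F]) auto
  have "b \<in> null_sets \<mu>" if "b \<in> F'" for b
  proof -
    from that F'(1) obtain a e where "b = ball a e" "emeasure \<mu> (ball a e) = 0"
      by blast
    then show ?thesis
      using sets by (simp add: null_sets_def)
  qed
  then have "(\<Union>b\<in>F'. b) \<in> null_sets \<mu>"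
    using F'(2) by (rule null_sets_UN'[rotated])
  then show ?thesis
    using F'(3) Compl_msupp_eq_Union_null_balls[OF sets] by simp
qed

lemma AE_in_msupp: "sets \<mu> = sets borel \<Longrightarrow> AE a in \<mu>. a \<in> msupp \<mu>"
  by (rule AE_I'[OF Compl_msupp_null]) auto

lemma msupp_subset_closed:
  assumes sets: "sets \<mu> = sets borel" and "closed X" and AE: "AE a in \<mu>. a \<in> X"
  shows "msupp \<mu> \<subseteq> X"
proof
  have X: "- X \<in> sets \<mu>"
    using \<open>closed X\<close> sets by (simp add: open_Compl)
  have "{a \<in> space \<mu>. a \<notin> X} = - X"
    using sets_eq_imp_space_eq[OF sets] by (simp add: Compl_eq)
  then have null: "emeasure \<mu> (- X) = 0"
    using AE_iff_measurable[OF X, of "\<lambda>a. a \<in> X"] AE by simp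
  fix a assume a: "a \<in> msupp \<mu>"
  show "a \<in> X"
  proof (rule ccontr)
    assume "a \<notin> X"
    moreover have "open (- X)"
      using \<open>closed X\<close> by (rule open_Compl)
    ultimately obtain e where e: "e > 0" "ball a e \<subseteq> - X"
      unfolding open_contains_ball by blast
    have "emeasure \<mu> (ball a e) = 0"
      using emeasure_mono[OF e(2) X] null by simp
    then show False
      using a e(1) by (auto simp: msupp_def)
  qed
qed

lemma (in prob_space) integral_less_by_gap:
  fixes f :: "'a \<Rightarrow> real"
  assumes int: "integrable M f" and le: "AE x in M. f x \<le> c"
    and B: "B \<in> events" "prob B > 0" and \<delta>: "\<delta> > 0" and gap: "\<And>x. x \<in> B \<Longrightarrow> f x \<le> c - \<delta>"
  shows "(\<integral>x. f x \<partial>M) < c"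
proof -
  define g where "g x = c - \<delta> * indicator B x" for x
  have ind: "integrable M (indicator B :: _ \<Rightarrow> real)"
    using B(1) by (simp add: integrable_real_indicator emeasure_eq_measure)
  then have "integrable M g"
    unfolding g_def by simp
  moreover have "AE x in M. f x \<le> g x"
    using le by eventually_elim (auto simp: g_def gap split: split_indicator)
  ultimately have "(\<integral>x. f x \<partial>M) \<le> (\<integral>x. g x \<partial>M)"
    by (intro integral_mono_AE int)
  also have "\<dots> = c - \<delta> * prob B"
    unfolding g_def using B(1) ind prob_space by (subst Bochner_Integration.integral_diff) auto
  also have "\<dots> < c"
    using \<delta> B(2) by simp
  finally show ?thesis .
qed

lemma continuous_eq_on_msupp:
  fixes f :: "'d::finite mat \<Rightarrow> real"
  assumes \<mu>: "prob_space \<mu>" "sets \<mu> = sets borel"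
    and cont: "continuous_on UNIV f" and int: "integrable \<mu> f"
    and le: "\<And>a. a \<in> msupp \<mu> \<Longrightarrow> f a \<le> c" and ge: "c \<le> (\<integral>a. f a \<partial>\<mu>)"
    and a0: "a0 \<in> msupp \<mu>"
  shows "f a0 = c"
proof (rule ccontr)
  interpret prob_space \<mu>
    by (rule \<mu>(1))
  assume "f a0 \<noteq> c"
  with le[OF a0] have "f a0 < c"
    by simp
  define \<delta> where "\<delta> = (c - f a0) / 2"
  have \<delta>: "\<delta> > 0"
    using \<open>f a0 < c\<close> by (simp add: \<delta>_def)
  have "isCont f a0"
    using cont by (simp add: continuous_on_eq_continuous_at)
  then obtain e where e: "e > 0" "\<And>x. dist x a0 < e \<Longrightarrow> dist (f x) (f a0) < \<delta>"
    using \<delta> unfolding continuous_at_eps_delta by blast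
  have gap: "f x \<le> c - \<delta>" if "x \<in> ball a0 e" for x
  proof -
    have "\<bar>f x - f a0\<bar> < \<delta>"
      using that e(2)[of x] by (simp add: dist_commute dist_real_def)
    then have "f x - f a0 < \<delta>"
      by (simp add: abs_less_iff)
    moreover have "2 * \<delta> = c - f a0"
      by (simp add: \<delta>_def)
    ultimately show ?thesis
      by linarith
  qed
  have AE: "AE a in \<mu>. f a \<le> c"
    using AE_in_msupp[OF \<mu>(2)] by eventually_elim (rule le)
  have pos: "prob (ball a0 e) > 0"
    using a0 e(1) by (simp add: msupp_def emeasure_eq_measure)
  have "(\<integral>a. f a \<partial>\<mu>) < c"
    by (rule integral_less_by_gap[OF int AE _ pos \<delta> gap]) (simp add: \<mu>(2))
  then show False
    using ge by simp
qed

section \<open>Laws of nonnegative random matrices\<close>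

lemma abs_ln_diff_ln_power_le:
  fixes r C x :: real
  assumes r: "r > 0" and C: "C \<ge> 1" and bounds: "r ^ n \<le> C * x" "x \<le> C * r ^ n"
  shows "\<bar>ln x - n * ln r\<bar> \<le> ln C"
proof -
  have "0 < C * x"
    using less_le_trans[OF zero_less_power[OF r] bounds(1)] .
  then have x: "0 < x"
    using C by (simp add: zero_less_mult_iff)
  have "n * ln r = ln (r ^ n)"
    using r by (simp add: ln_realpow)
  also have "\<dots> \<le> ln (C * x)"
    using bounds(1) r x C by simp
  also have "\<dots> = ln C + ln x"
    using C x by (simp add: ln_mult)
  finally have lower: "n * ln r \<le> ln C + ln x" .
  have "ln x \<le> ln (C * r ^ n)"
    using bounds(2) x by simp
  also have "\<dots> = ln C + n * ln r"
    using C r by (simp add: ln_mult ln_realpow)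
  finally show ?thesis
    using lower by (simp add: abs_le_iff)
qed

lemma (in prob_space) abs_integral_diff_le:
  fixes f :: "'a \<Rightarrow> real"
  assumes AE: "AE x in M. \<bar>f x - c\<bar> \<le> b" and f: "f \<in> borel_measurable M"
  shows "\<bar>(\<integral>x. f x \<partial>M) - c\<bar> \<le> b"
proof -
  have "AE x in M. norm (f x) \<le> norm (\<bar>c\<bar> + b)"
    using AE by eventually_elim (simp add: abs_le_iff; linarith)
  then have int: "integrable M f"
    by (rule Bochner_Integration.integrable_bound[OF integrable_const f])
  have "AE x in M. c - b \<le> f x"
    using AE by eventually_elim (auto simp: abs_le_iff)
  then have "c - b \<le> (\<integral>x. f x \<partial>M)"
    using integral_mono_AE[OF integrable_const int] by (simp add: prob_space)
  moreover have "AE x in M. f x \<le> c + b"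
    using AE by eventually_elim (auto simp: abs_le_iff)
  then have "(\<integral>x. f x \<partial>M) \<le> c + b"
    using integral_mono_AE[OF int integrable_const] by (simp add: prob_space)
  ultimately show ?thesis
    by (simp add: abs_le_iff)
qed

locale matrix_law = prob_space \<mu> for \<mu> :: "('d::finite) mat measure" +
  assumes sets_eq_borel: "sets \<mu> = sets borel"
    and AE_nonneg_mat: "AE a in \<mu>. nonneg_mat a"
    and nn_integral_opnorm1_finite: "(\<integral>\<^sup>+ a. ennreal (opnorm1 a) \<partial>\<mu>) < \<infinity>"
begin

lemma borel_measurable_lawI: "f \<in> borel_measurable borel \<Longrightarrow> f \<in> borel_measurable \<mu>"
  using measurable_cong_sets[OF sets_eq_borel refl] by blast

lemma msupp_nonneg_mat: "a \<in> msupp \<mu> \<Longrightarrow> nonneg_mat a"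
  using msupp_subset_closed[OF sets_eq_borel closed_nonneg_mat] AE_nonneg_mat by auto

lemma integrable_ident: "integrable \<mu> (\<lambda>a. a)"
proof (rule integrableI_bounded)
  show "(\<lambda>a. a) \<in> borel_measurable \<mu>"
    by (rule borel_measurable_lawI) simp
  have "(\<integral>\<^sup>+ a. ennreal (norm a) \<partial>\<mu>) \<le> (\<integral>\<^sup>+ a. ennreal (real CARD('d)) * ennreal (opnorm1 a) \<partial>\<mu>)"
    by (intro nn_integral_mono) (simp add: ennreal_mult'[symmetric] norm_le_opnorm1 opnorm1_nonneg)
  also have "\<dots> = ennreal (real CARD('d)) * (\<integral>\<^sup>+ a. ennreal (opnorm1 a) \<partial>\<mu>)"
    by (rule nn_integral_cmult) (auto intro!: borel_measurable_lawI measurable_compose[OF _ measurable_ennreal]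
        borel_measurable_continuous_onI continuous_on_opnorm1)
  also have "\<dots> < \<infinity>"
    using nn_integral_opnorm1_finite by (simp add: ennreal_mult_less_top)
  finally show "(\<integral>\<^sup>+ a. ennreal (norm a) \<partial>\<mu>) < \<infinity>" .
qed

lemma integrable_linear_image:
  assumes "bounded_linear T"
  shows "integrable \<mu> (\<lambda>a. T a)"
  using integrable_bounded_linear[OF assms integrable_ident] by simp

lemma integral_linear_image:
  assumes "bounded_linear T"
  shows "(\<integral>a. T a \<partial>\<mu>) = T (\<integral>a. a \<partial>\<mu>)"
  using integral_bounded_linear[OF assms integrable_ident] by simp

lemma mean_entry: "(\<integral>a. a \<partial>\<mu>) $ i $ j = (\<integral>a. a $ i $ j \<partial>\<mu>)"
  using integral_linear_image[OF bounded_linear_compose[OF bounded_linear_vec_nth bounded_linear_vec_nth]]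
  by simp

lemma nonneg_mat_mean: "nonneg_mat (\<integral>a. a \<partial>\<mu>)"
  unfolding nonneg_mat_def mean_entry
proof (intro allI integral_nonneg_AE)
  show "AE a in \<mu>. 0 \<le> a $ i $ j" for i j
    using AE_nonneg_mat by eventually_elim (simp add: nonneg_mat_def)
qed

lemma borel_measurable_mprod_map:
  "n \<le> m \<Longrightarrow> (\<lambda>x. mprod (map x [0..<n])) \<in> borel_measurable (PiM {0..<m} (\<lambda>_. \<mu>))"
proof (induction n)
  case (Suc n)
  have IH: "(\<lambda>x. mprod (map x [0..<n])) \<in> borel_measurable (PiM {0..<m} (\<lambda>_. \<mu>))"
    using Suc by simp
  have component: "(\<lambda>x. x n) \<in> borel_measurable (PiM {0..<m} (\<lambda>_. \<mu>))"
    using Suc.prems measurable_component_singleton[of n "{0..<m}" "\<lambda>_. \<mu>"]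
    by (simp add: measurable_cong_sets[OF refl sets_eq_borel])
  have mult: "continuous_on UNIV (\<lambda>p :: 'd mat \<times> 'd mat. fst p ** snd p)"
    unfolding matrix_matrix_mult_def by (intro continuous_intros)
  have eq: "(\<lambda>x. mprod (map x [0..<Suc n])) = (\<lambda>x. mprod (map x [0..<n]) ** x n)"
    by (simp add: mprod_snoc)
  show ?case
    unfolding eq by (rule borel_measurable_continuous_Pair[OF IH component mult])
qed simp

lemma integral_ln_opnorm1_mprod_bounded:
  assumes r: "r > 0" and C: "C \<ge> 1"
    and bounds: "\<And>as. set as \<subseteq> msupp \<mu> \<Longrightarrow>
      r ^ length as \<le> C * opnorm1 (mprod as) \<and> opnorm1 (mprod as) \<le> C * r ^ length as"
  shows "\<bar>(\<integral>x. ln (opnorm1 (mprod (map x [0..<n]))) \<partial>PiM {0..<n} (\<lambda>_. \<mu>)) - n * ln r\<bar> \<le> ln C"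
proof -
  let ?P = "PiM {0..<n} (\<lambda>_. \<mu>)"
  interpret P: prob_space ?P
    by (rule prob_space_PiM) (rule prob_space_axioms)
  have "AE x in ?P. \<forall>i\<in>{0..<n}. x i \<in> msupp \<mu>"
    by (intro AE_finite_allI AE_PiM_component prob_space_axioms AE_in_msupp[OF sets_eq_borel]) simp_all
  then have "AE x in ?P. \<bar>ln (opnorm1 (mprod (map x [0..<n]))) - n * ln r\<bar> \<le> ln C"
  proof eventually_elim
    case (elim x)
    then have "set (map x [0..<n]) \<subseteq> msupp \<mu>"
      by auto
    from bounds[OF this] show ?case
      by (intro abs_ln_diff_ln_power_le[OF r C]) simp_all
  qed
  moreover have "(\<lambda>x. ln (opnorm1 (mprod (map x [0..<n])))) \<in> borel_measurable ?P"
    by (intro borel_measurable_ln borel_measurable_continuous_on[OF continuous_on_opnorm1]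
        borel_measurable_mprod_map) simp
  ultimately show ?thesis
    by (intro P.abs_integral_diff_le)
qed

lemma lyap_eq_ln:
  assumes r: "r > 0" and C: "C \<ge> 1"
    and bounds: "\<And>as. set as \<subseteq> msupp \<mu> \<Longrightarrow>
      r ^ length as \<le> C * opnorm1 (mprod as) \<and> opnorm1 (mprod as) \<le> C * r ^ length as"
  shows "lyap \<mu> = ln r"
proof -
  define I where "I n = (\<integral>x. ln (opnorm1 (mprod (map x [0..<n]))) \<partial>PiM {0..<n} (\<lambda>_. \<mu>))" for n
  have "(\<lambda>n. I n / n - ln r) \<longlonglongrightarrow> 0"
  proof (rule Lim_null_comparison)
    show "\<forall>\<^sub>F n in sequentially. norm (I n / n - ln r) \<le> ln C / n"
      using eventually_gt_at_top[of 0]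
    proof eventually_elim
      case (elim n)
      then have "I n / n - ln r = (I n - n * ln r) / n"
        by (simp add: field_simps)
      then show ?case
        using integral_ln_opnorm1_mprod_bounded[OF r C bounds, of n] elim
        by (simp add: I_def divide_right_mono)
    qed
    show "(\<lambda>n. ln C / real n) \<longlonglongrightarrow> 0"
      by (rule lim_const_over_n)
  qed
  then have "(\<lambda>n. I n / n) \<longlonglongrightarrow> ln r"
    by (simp add: LIM_zero_iff)
  then show ?thesis
    unfolding lyap_def I_def[symmetric] by (rule limI)
qed

end

section \<open>Maximal normalized growth\<close>

text \<open>The signed coordinate sum rather than the l1 norm makes each candidate linear in
  \<open>y\<close>, as Jensen's inequality below requires; on nonnegative vectors they agree.\<close>

definition max_growth :: "('d::finite) mat set \<Rightarrow> real \<Rightarrow> real ^ 'd \<Rightarrow> real" where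
  "max_growth S r y = Sup {coord_sum (mprod as *v y) / r ^ length as |as. set as \<subseteq> S}"

locale growth_bounded =
  fixes S :: "('d::finite) mat set" and r C :: real
  assumes nonneg_mat: "a \<in> S \<Longrightarrow> nonneg_mat a"
    and r_pos: "r > 0" and C_ge_1: "C \<ge> 1"
    and opnorm1_mprod_le: "set as \<subseteq> S \<Longrightarrow> opnorm1 (mprod as) \<le> C * r ^ length as"
begin

abbreviation F :: "real ^ 'd \<Rightarrow> real" where
  "F \<equiv> max_growth S r"

lemma normalized_growth_le: "set as \<subseteq> S \<Longrightarrow> coord_sum (mprod as *v y) / r ^ length as \<le> C * l1 y"
proof -
  assume as: "set as \<subseteq> S"
  have "coord_sum (mprod as *v y) \<le> opnorm1 (mprod as) * l1 y"
    using coord_sum_le_l1 l1_matrix_vector_le order_trans by blast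
  also have "\<dots> \<le> C * r ^ length as * l1 y"
    by (rule mult_right_mono[OF opnorm1_mprod_le[OF as] l1_nonneg])
  finally show ?thesis
    using r_pos by (simp add: divide_le_eq mult_ac)
qed

lemma max_growth_ge: "set as \<subseteq> S \<Longrightarrow> coord_sum (mprod as *v y) / r ^ length as \<le> F y"
  unfolding max_growth_def using normalized_growth_le by (intro cSup_upper bdd_aboveI) blast+

lemma max_growth_least:
  "(\<And>as. set as \<subseteq> S \<Longrightarrow> coord_sum (mprod as *v y) / r ^ length as \<le> M) \<Longrightarrow> F y \<le> M"
  unfolding max_growth_def by (rule cSup_least) (auto intro!: exI[of _ "[]"])

lemma max_growth_le_l1: "F y \<le> C * l1 y"
  by (rule max_growth_least) (rule normalized_growth_le)

lemma coord_sum_le_max_growth: "coord_sum y \<le> F y"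
  using max_growth_ge[of "[]" y] by simp

lemma abs_max_growth_le: "\<bar>F y\<bar> \<le> C * l1 y"
proof -
  have "- l1 y \<le> coord_sum y"
    using abs_coord_sum_le_l1[of y] by linarith
  moreover have "l1 y \<le> C * l1 y"
    using C_ge_1 l1_nonneg[of y] by (simp add: mult_le_cancel_right1)
  ultimately show ?thesis
    using coord_sum_le_max_growth[of y] max_growth_le_l1[of y] by linarith
qed

lemma max_growth_diff_le: "F x \<le> F y + C * l1 (x - y)"
proof (rule max_growth_least)
  fix as assume as: "set as \<subseteq> S"
  have "coord_sum (mprod as *v x) / r ^ length as
      = coord_sum (mprod as *v y) / r ^ length as + coord_sum (mprod as *v (x - y)) / r ^ length as"
    by (simp add: matrix_vector_mult_diff_distrib coord_sum_diff add_divide_distrib[symmetric])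
  also have "\<dots> \<le> F y + C * l1 (x - y)"
    by (intro add_mono max_growth_ge normalized_growth_le as)
  finally show "coord_sum (mprod as *v x) / r ^ length as \<le> F y + C * l1 (x - y)" .
qed

lemma lipschitz_on_max_growth: "(C * real CARD('d))-lipschitz_on UNIV F"
proof (rule lipschitz_onI)
  have diff: "F x - F y \<le> C * real CARD('d) * dist x y" for x y
  proof -
    have "F x - F y \<le> C * l1 (x - y)"
      using max_growth_diff_le[of x y] by simp
    also have "\<dots> \<le> C * (real CARD('d) * norm (x - y))"
      using C_ge_1 by (intro mult_left_mono l1_le_norm) auto
    finally show ?thesis
      by (simp add: dist_norm)
  qed
  show "dist (F x) (F y) \<le> C * real CARD('d) * dist x y" for x y
    using diff[of x y] diff[of y x] by (simp add: dist_real_def dist_commute abs_le_iff)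
qed (use C_ge_1 in simp)

lemma continuous_on_max_growth: "continuous_on UNIV F"
  by (rule lipschitz_on_continuous_on[OF lipschitz_on_max_growth])

lemma nonneg_mat_mprod_in: "set as \<subseteq> S \<Longrightarrow> nonneg_mat (mprod as)"
  by (rule nonneg_mat_mprod) (use nonneg_mat in blast)

lemma max_growth_mono: "(\<And>i. x $ i \<le> y $ i) \<Longrightarrow> F x \<le> F y"
proof (rule max_growth_least)
  fix as assume xy: "\<And>i. x $ i \<le> y $ i" and as: "set as \<subseteq> S"
  have "coord_sum (mprod as *v x) \<le> coord_sum (mprod as *v y)"
    unfolding coord_sum_def by (intro sum_mono matrix_vector_mono nonneg_mat_mprod_in[OF as] xy)
  then have "coord_sum (mprod as *v x) / r ^ length as \<le> coord_sum (mprod as *v y) / r ^ length as"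
    using r_pos by (simp add: divide_right_mono)
  also have "\<dots> \<le> F y"
    by (rule max_growth_ge[OF as])
  finally show "coord_sum (mprod as *v x) / r ^ length as \<le> F y" .
qed

lemma max_growth_scaleR_ge:
  assumes c: "c > 0"
  shows "c * F y \<le> F (c *\<^sub>R y)"
proof -
  have "F y \<le> F (c *\<^sub>R y) / c"
  proof (rule max_growth_least)
    fix as assume as: "set as \<subseteq> S"
    have "coord_sum (mprod as *v y) / r ^ length as = (coord_sum (mprod as *v (c *\<^sub>R y)) / r ^ length as) / c"
      using c by (simp add: matrix_vector_mult_scaleR coord_sum_scaleR)
    also have "\<dots> \<le> F (c *\<^sub>R y) / c"
      using c by (intro divide_right_mono max_growth_ge[OF as]) simp
    finally show "coord_sum (mprod as *v y) / r ^ length as \<le> F (c *\<^sub>R y) / c" .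
  qed
  then show ?thesis
    using c by (simp add: le_divide_eq mult.commute)
qed

lemma max_growth_mprod_le:
  assumes ps: "set ps \<subseteq> S"
  shows "F (mprod ps *v y) \<le> r ^ length ps * F y"
proof (rule max_growth_least)
  fix as assume as: "set as \<subseteq> S"
  have "coord_sum (mprod as *v (mprod ps *v y)) / r ^ length as
      = r ^ length ps * (coord_sum (mprod (as @ ps) *v y) / r ^ length (as @ ps))"
    using r_pos by (simp add: mprod_append matrix_vector_mul_assoc power_add field_simps)
  also have "\<dots> \<le> r ^ length ps * F y"
    using as ps r_pos by (intro mult_left_mono max_growth_ge) auto
  finally show "coord_sum (mprod as *v (mprod ps *v y)) / r ^ length as \<le> r ^ length ps * F y" .
qed

end

section \<open>Rigidity of maximal growth on the support\<close>

locale growth_bounded_law = matrix_law \<mu> + growth_bounded "msupp \<mu>" r C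
  for \<mu> :: "('d::finite) mat measure" and r C
begin

abbreviation mean :: "'d mat" where
  "mean \<equiv> \<integral>a. a \<partial>\<mu>"

lemma continuous_on_max_growth_image:
  fixes p :: "'d mat" and z :: "real ^ 'd"
  shows "continuous_on UNIV (\<lambda>a. F (p *v (a *v z)))"
proof -
  have "continuous_on UNIV (\<lambda>a :: 'd mat. p *v (a *v z))"
    unfolding matrix_vector_mult_def by (intro continuous_intros)
  then show ?thesis
    using continuous_on_compose2[OF continuous_on_max_growth] by blast
qed

lemma integrable_max_growth_image:
  fixes p :: "'d mat" and z :: "real ^ 'd"
  shows "integrable \<mu> (\<lambda>a. F (p *v (a *v z)))"
proof (rule Bochner_Integration.integrable_bound)
  let ?K = "C * opnorm1 p * real CARD('d) * l1 z"
  show "integrable \<mu> (\<lambda>a. ?K *\<^sub>R a)"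
    using integrable_ident by simp
  show "(\<lambda>a. F (p *v (a *v z))) \<in> borel_measurable \<mu>"
    by (intro borel_measurable_lawI borel_measurable_continuous_onI continuous_on_max_growth_image)
  have "norm (F (p *v (a *v z))) \<le> norm (?K *\<^sub>R a)" for a :: "'d mat"
  proof -
    have "norm (F (p *v (a *v z))) \<le> C * l1 (p *v (a *v z))"
      using abs_max_growth_le by simp
    also have "\<dots> \<le> C * (opnorm1 p * (opnorm1 a * l1 z))"
      using C_ge_1 l1_matrix_vector_le[of p "a *v z"] l1_matrix_vector_le[of a z] opnorm1_nonneg[of p]
      by (intro mult_left_mono) (auto intro: order_trans mult_left_mono)
    also have "\<dots> \<le> C * (opnorm1 p * ((real CARD('d) * norm a) * l1 z))"
      using C_ge_1 opnorm1_nonneg[of p] l1_nonneg[of z]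
      by (intro mult_left_mono mult_right_mono opnorm1_le_norm) auto
    also have "\<dots> = norm (?K *\<^sub>R a)"
      using C_ge_1 by (simp add: opnorm1_nonneg l1_nonneg)
    finally show ?thesis .
  qed
  then show "AE a in \<mu>. norm (F (p *v (a *v z))) \<le> norm (?K *\<^sub>R a)"
    by simp
qed

text \<open>Jensen's inequality for \<open>F\<close>, which is a supremum of linear functionals.\<close>

lemma max_growth_mean_le_integral:
  fixes p :: "'d mat" and z :: "real ^ 'd"
  shows "F (p *v (mean *v z)) \<le> (\<integral>a. F (p *v (a *v z)) \<partial>\<mu>)"
proof (rule max_growth_least)
  fix as assume as: "set as \<subseteq> msupp \<mu>"
  let ?T = "\<lambda>a. coord_sum (mprod as *v (p *v (a *v z))) / r ^ length as"
  have "linear ?T"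
    by (intro linearI) (simp_all add: matrix_vector_mult_add_rdistrib matrix_vector_right_distrib
        coord_sum_add add_divide_distrib scaleR_matrix_vector_assoc[symmetric]
        matrix_vector_mult_scaleR coord_sum_scaleR)
  then have T: "bounded_linear ?T"
    by (simp add: linear_conv_bounded_linear)
  have "?T mean = (\<integral>a. ?T a \<partial>\<mu>)"
    by (rule integral_linear_image[OF T, symmetric])
  also have "\<dots> \<le> (\<integral>a. F (p *v (a *v z)) \<partial>\<mu>)"
    by (intro integral_mono integrable_linear_image[OF T] integrable_max_growth_image max_growth_ge as)
  finally show "?T mean \<le> (\<integral>a. F (p *v (a *v z)) \<partial>\<mu>)" .
qed

text \<open>Each factor multiplies \<open>F\<close> by at most \<open>r\<close> pointwise and by at least \<open>r\<close> on
  average; continuity then forces equality everywhere on the support.\<close>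

lemma max_growth_mprod_sub_eigenvector:
  assumes z: "\<And>i. z $ i \<ge> 0" and mean_z: "\<And>i. r * z $ i \<le> (mean *v z) $ i"
  shows "set ps \<subseteq> msupp \<mu> \<Longrightarrow> F (mprod ps *v z) = r ^ length ps * F z"
proof (induction ps rule: rev_induct)
  case (snoc a ps)
  let ?p = "mprod ps" and ?n = "length ps"
  have ps: "set ps \<subseteq> msupp \<mu>" and a: "a \<in> msupp \<mu>"
    using snoc.prems by auto
  have upper: "F (?p *v (b *v z)) \<le> r ^ Suc ?n * F z" if b: "b \<in> msupp \<mu>" for b
  proof -
    have "F (?p *v (b *v z)) \<le> r ^ ?n * F (b *v z)"
      by (rule max_growth_mprod_le[OF ps])
    also have "\<dots> \<le> r ^ ?n * (r * F z)"
      using max_growth_mprod_le[of "[b]" z] b r_pos by (intro mult_left_mono) simp_all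
    finally show ?thesis
      by (simp add: mult_ac)
  qed
  have "r ^ Suc ?n * F z = r * F (?p *v z)"
    using snoc.IH ps by simp
  also have "\<dots> \<le> F (?p *v (r *\<^sub>R z))"
    using max_growth_scaleR_ge[OF r_pos] by (simp add: matrix_vector_mult_scaleR)
  also have "\<dots> \<le> F (?p *v (mean *v z))"
    using mean_z by (intro max_growth_mono matrix_vector_mono nonneg_mat_mprod_in ps) simp
  also have "\<dots> \<le> (\<integral>b. F (?p *v (b *v z)) \<partial>\<mu>)"
    by (rule max_growth_mean_le_integral)
  finally have "F (?p *v (a *v z)) = r ^ Suc ?n * F z"
    by (intro continuous_eq_on_msupp[OF prob_space_axioms sets_eq_borel
          continuous_on_max_growth_image integrable_max_growth_image upper _ a])
  then show ?case
    by (simp add: mprod_snoc matrix_vector_mul_assoc)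
qed simp

lemma opnorm1_mprod_ge:
  assumes z: "\<And>i. z $ i \<ge> 0" "z \<noteq> 0" and mean_z: "\<And>i. r * z $ i \<le> (mean *v z) $ i"
    and ps: "set ps \<subseteq> msupp \<mu>"
  shows "r ^ length ps \<le> C * opnorm1 (mprod ps)"
proof -
  obtain i where "z $ i \<noteq> 0"
    using z(2) by (metis vec_eq_iff zero_index)
  then have l1_pos: "l1 z > 0"
    using abs_component_le_l1[of z i] by linarith
  have "r ^ length ps * l1 z \<le> r ^ length ps * F z"
    using coord_sum_le_max_growth[of z] l1_eq_coord_sum[of z] z(1) r_pos by simp
  also have "\<dots> = F (mprod ps *v z)"
    using max_growth_mprod_sub_eigenvector[OF z(1) mean_z ps] by simp
  also have "\<dots> \<le> C * l1 (mprod ps *v z)"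
    by (rule max_growth_le_l1)
  also have "\<dots> \<le> C * opnorm1 (mprod ps) * l1 z"
    using C_ge_1 l1_matrix_vector_le[of "mprod ps" z] by (simp add: mult.assoc)
  finally show ?thesis
    using l1_pos by simp
qed

end

section \<open>Products with small spectral radius have small norm\<close>

lemma sandwich_entry_ge:
  fixes g h :: "('d::finite) mat"
  assumes h: "nonneg_mat h" and g: "\<And>i j. m \<le> g $ i $ j" and m: "0 \<le> m"
  shows "m * m * (\<Sum>k\<in>UNIV. \<Sum>l\<in>UNIV. h $ k $ l) \<le> ((g ** h) ** g) $ i $ j"
proof -
  define col where "col l = (\<Sum>k\<in>UNIV. h $ k $ l)" for l
  have col_nonneg: "0 \<le> col l" for l
    using h by (auto simp: col_def nonneg_mat_def intro: sum_nonneg)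
  have gh: "m * col l \<le> (g ** h) $ i $ l" for l
  proof -
    have "m * col l = (\<Sum>k\<in>UNIV. m * h $ k $ l)"
      by (simp add: col_def sum_distrib_left)
    also have "\<dots> \<le> (\<Sum>k\<in>UNIV. g $ i $ k * h $ k $ l)"
      using h g by (intro sum_mono mult_right_mono) (auto simp: nonneg_mat_def)
    finally show ?thesis
      by (simp add: matrix_matrix_mult_def)
  qed
  have "m * m * (\<Sum>k\<in>UNIV. \<Sum>l\<in>UNIV. h $ k $ l) = (\<Sum>l\<in>UNIV. m * col l * m)"
    by (subst sum.swap) (simp add: col_def sum_distrib_left sum_distrib_right mult_ac)
  also have "\<dots> \<le> (\<Sum>l\<in>UNIV. (g ** h) $ i $ l * g $ l $ j)"
    using gh g m col_nonneg by (intro sum_mono mult_mono) (auto intro: order_trans[OF _ gh])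
  finally show ?thesis
    by (simp add: matrix_matrix_mult_def)
qed

lemma pos_mat_ex_entry_lower_bound:
  assumes "pos_mat (g :: ('d::finite) mat)"
  obtains m where "m > 0" "\<And>i j. m \<le> g $ i $ j"
proof
  let ?m = "Min (range (\<lambda>(i, j). g $ i $ j))"
  show "?m \<le> g $ i $ j" for i j
    by (rule Min_le) (auto intro: image_eqI[of _ _ "(i, j)"])
  have "?m \<in> range (\<lambda>(i, j). g $ i $ j)"
    by (rule Min_in) auto
  then show "?m > 0"
    using assms by (auto simp: pos_mat_def)
qed

lemma sandwich_spec_rad_ge:
  fixes g h :: "('d::finite) mat"
  assumes h: "nonneg_mat h" and g: "\<And>i j. m \<le> g $ i $ j" and m: "m > 0"
    and total: "0 < (\<Sum>k\<in>UNIV. \<Sum>l\<in>UNIV. h $ k $ l)"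
  shows "pos_mat ((g ** h) ** g)" and "m * m * opnorm1 h \<le> spec_rad ((g ** h) ** g)"
proof -
  let ?total = "\<Sum>k\<in>UNIV. \<Sum>l\<in>UNIV. h $ k $ l"
  have entries: "m * m * ?total \<le> ((g ** h) ** g) $ i $ j" for i j
    using sandwich_entry_ge[OF h g] m by simp
  have "0 < m * m * ?total"
    using m total by simp
  then show "pos_mat ((g ** h) ** g)"
    unfolding pos_mat_def using entries by (meson less_le_trans)
  have "m * m * opnorm1 h \<le> m * m * ?total"
    using opnorm1_nonneg_mat_le_entry_sum[OF h] m by simp
  also have "\<dots> \<le> spec_rad ((g ** h) ** g)"
    using \<open>0 < m * m * ?total\<close> by (intro spec_rad_ge_entry_bound entries)
  finally show "m * m * opnorm1 h \<le> spec_rad ((g ** h) ** g)" .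
qed

lemma opnorm1_mprod_le_if_spec_rad_small:
  assumes nonneg: "\<And>a. a \<in> S \<Longrightarrow> nonneg_mat a"
    and as0: "set as0 \<subseteq> S" "pos_mat (mprod as0)"
    and small: "\<And>as. as \<noteq> [] \<Longrightarrow> set as \<subseteq> S \<Longrightarrow> pos_mat (mprod as) \<Longrightarrow>
      spec_rad (mprod as) < R * r ^ length as"
    and r: "r > 0"
  obtains C where "C \<ge> 1" "\<And>as. set as \<subseteq> S \<Longrightarrow> opnorm1 (mprod as) \<le> C * r ^ length as"
proof -
  let ?g = "mprod as0"
  obtain m where m: "m > 0" "\<And>i j. m \<le> ?g $ i $ j"
    using pos_mat_ex_entry_lower_bound[OF as0(2)] by blast
  define C where "C = max 1 (R * r ^ (2 * length as0) / (m * m))"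
  have C: "C \<ge> 1"
    by (simp add: C_def)
  have "opnorm1 (mprod as) \<le> C * r ^ length as" if as: "set as \<subseteq> S" for as
  proof -
    let ?h = "mprod as"
    let ?total = "\<Sum>k\<in>UNIV. \<Sum>l\<in>UNIV. ?h $ k $ l"
    have h: "nonneg_mat ?h"
      using as nonneg by (intro nonneg_mat_mprod) blast
    have "0 \<le> ?total"
      using h by (auto simp: nonneg_mat_def intro!: sum_nonneg)
    then consider "as = []" | "?total = 0" | "as \<noteq> []" "?total > 0"
      by (auto simp: le_less)
    then show ?thesis
    proof cases
      case 1
      then show ?thesis
        using C by simp
    next
      case 2
      have "0 \<le> C * r ^ length as"
        using C r by simp
      then show ?thesis
        using opnorm1_nonneg_mat_le_entry_sum[OF h] 2 by linarith
    next
      case 3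
      let ?big = "as0 @ as @ as0"
      have big: "mprod ?big = (?g ** ?h) ** ?g"
        by (simp add: mprod_append matrix_mul_assoc)
      have "r ^ length ?big = r ^ (2 * length as0) * r ^ length as"
        by (simp only: length_append power_add mult_2) (simp add: mult_ac)
      then have "spec_rad (mprod ?big) < R * r ^ (2 * length as0) * r ^ length as"
        using small[of ?big] sandwich_spec_rad_ge(1)[OF h m(2,1) 3(2)] as as0(1) 3(1)
        by (simp add: big mult.assoc)
      then have "m * m * opnorm1 ?h < R * r ^ (2 * length as0) * r ^ length as"
        using sandwich_spec_rad_ge(2)[OF h m(2,1) 3(2)] by (simp add: big)
      then have "opnorm1 ?h < (R * r ^ (2 * length as0) / (m * m)) * r ^ length as"
        using m(1) by (simp add: field_simps)
      also have "\<dots> \<le> C * r ^ length as"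
        using r by (intro mult_right_mono) (auto simp: C_def)
      finally show ?thesis
        by simp
    qed
  qed
  with C show ?thesis
    by (rule that)
qed

section \<open>Positive products of large spectral radius\<close>

lemma (in matrix_law) ex_pos_mprod_spec_rad_ge:
  assumes C2: "cond_C2 \<mu>" and gap: "exp (lyap \<mu>) < spec_rad (\<integral>a. a \<partial>\<mu>)"
  shows "\<forall>R>0. \<exists>K>0. \<exists>as. length as = K \<and> set as \<subseteq> msupp \<mu> \<and>
    pos_mat (mprod as) \<and> R * spec_rad (\<integral>a. a \<partial>\<mu>) ^ K \<le> spec_rad (mprod as)"
proof (rule ccontr)
  define r where "r = spec_rad (\<integral>a. a \<partial>\<mu>)"
  have r: "r > 0"
    using gap unfolding r_def by (meson exp_gt_zero less_trans)
  assume "\<not> ?thesis"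
  then obtain R where "\<not> (\<exists>K>0. \<exists>as. length as = K \<and> set as \<subseteq> msupp \<mu> \<and>
      pos_mat (mprod as) \<and> R * r ^ K \<le> spec_rad (mprod as))"
    unfolding r_def by blast
  then have small: "spec_rad (mprod as) < R * r ^ length as"
    if "as \<noteq> []" "set as \<subseteq> msupp \<mu>" "pos_mat (mprod as)" for as
    using that by (auto simp: not_le)
  obtain as0 where as0: "set as0 \<subseteq> msupp \<mu>" "pos_mat (mprod as0)"
    using C2 unfolding cond_C2_def gen_semigroup_def by blast
  obtain C where C: "C \<ge> 1" "\<And>as. set as \<subseteq> msupp \<mu> \<Longrightarrow> opnorm1 (mprod as) \<le> C * r ^ length as"
    using opnorm1_mprod_le_if_spec_rad_small[OF msupp_nonneg_mat as0 small r] by blast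
  interpret growth_bounded_law \<mu> r C
    by unfold_locales (use msupp_nonneg_mat r C in auto)
  obtain z where z: "\<And>i. z $ i \<ge> 0" "z \<noteq> 0" "\<And>i. r * z $ i \<le> (mean *v z) $ i"
    using nonneg_mat_ex_sub_eigenvector[OF nonneg_mat_mean] unfolding r_def by blast
  have "lyap \<mu> = ln r"
    using r C by (intro lyap_eq_ln) (auto intro: opnorm1_mprod_ge[OF z])
  then show False
    using gap r unfolding r_def by simp
qed

lemma prob_space_normalized_intensity:
  fixes M :: "'w measure" and N :: "'w \<Rightarrow> nat" and A :: "nat \<Rightarrow> 'w \<Rightarrow> 'a::topological_space"
  assumes sets: "sets \<mu> = sets borel"
    and \<mu>: "\<And>B. B \<in> sets borel \<Longrightarrow>
      emeasure \<mu> B = ennreal ((\<integral>\<omega>. (\<Sum>i\<in>{1..N \<omega>}. indicator B (A i \<omega>)) \<partial>M) / (\<integral>\<omega>. real (N \<omega>) \<partial>M))"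
    and EN: "(\<integral>\<omega>. real (N \<omega>) \<partial>M) \<noteq> 0"
  shows "prob_space \<mu>"
proof (rule prob_spaceI)
  have "emeasure \<mu> UNIV = ennreal ((\<integral>\<omega>. real (N \<omega>) \<partial>M) / (\<integral>\<omega>. real (N \<omega>) \<partial>M))"
    using \<mu>[of UNIV] by simp
  then show "emeasure \<mu> (space \<mu>) = 1"
    using EN sets_eq_imp_space_eq[OF sets] by simp
qed

lemma AE_normalized_intensity:
  fixes M :: "'w measure" and N :: "'w \<Rightarrow> nat" and A :: "nat \<Rightarrow> 'w \<Rightarrow> 'a::topological_space"
  assumes sets: "sets \<mu> = sets borel"
    and \<mu>: "\<And>B. B \<in> sets borel \<Longrightarrow>
      emeasure \<mu> B = ennreal ((\<integral>\<omega>. (\<Sum>i\<in>{1..N \<omega>}. indicator B (A i \<omega>)) \<partial>M) / (\<integral>\<omega>. real (N \<omega>) \<partial>M))"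
    and P_borel: "{a. \<not> P a} \<in> sets borel"
    and P: "\<And>i \<omega>. \<omega> \<in> space M \<Longrightarrow> P (A i \<omega>)"
  shows "AE a in \<mu>. P a"
proof (rule AE_I')
  have "(\<integral>\<omega>. (\<Sum>i\<in>{1..N \<omega>}. indicator {a. \<not> P a} (A i \<omega>) :: real) \<partial>M) = (\<integral>\<omega>. 0 \<partial>M)"
    using P by (intro Bochner_Integration.integral_cong) auto
  then show "{a. \<not> P a} \<in> null_sets \<mu>"
    using \<mu>[OF P_borel] P_borel sets by (simp add: null_sets_def)
qed auto

theorem lemma2p6:
  fixes M :: "'w measure" and N :: "'w \<Rightarrow> nat" and A :: "nat \<Rightarrow> 'w \<Rightarrow> ('d::finite) mat"
    and \<mu> :: "'d mat measure"
  assumes M: "prob_space M"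
    and N_meas: "N \<in> measurable M (count_space UNIV)"
    and A_meas: "\<And>i. A i \<in> borel_measurable M"
    and C1_N: "AE \<omega> in M. N \<omega> \<ge> 1"
    and C1_EN: "integrable M (\<lambda>\<omega>. real (N \<omega>))" "(\<integral>\<omega>. real (N \<omega>) \<partial>M) > 1"
    and C1_G: "\<And>i \<omega>. \<omega> \<in> space M \<Longrightarrow> nonneg_mat (A i \<omega>)"
    and C1_nz: "\<And>i \<omega>. \<omega> \<in> space M \<Longrightarrow> i \<ge> 1 \<Longrightarrow> (A i \<omega> \<noteq> 0 \<longleftrightarrow> i \<le> N \<omega>)"
    and mu_sets: "sets \<mu> = sets borel"
    and mu_def: "\<And>B. B \<in> sets borel \<Longrightarrow>
       emeasure \<mu> B = ennreal ((\<integral>\<omega>. (\<Sum>i\<in>{1..N \<omega>}. indicator B (A i \<omega>)) \<partial>M)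
                                / (\<integral>\<omega>. real (N \<omega>) \<partial>M))"
    and C2: "cond_C2 \<mu>"
    and logN: "(\<integral>\<^sup>+ a. logplus_N a \<partial>\<mu>) < \<infinity>"
    and I1: "(\<integral>\<^sup>+ a. ennreal (opnorm1 a) \<partial>\<mu>) < \<infinity>"
    and rEA: "spec_rad (\<integral>a. a \<partial>\<mu>) > exp (lyap \<mu>)"
  shows "\<forall>R>0. \<exists>K>0. \<exists>as. length as = K \<and> set as \<subseteq> msupp \<mu> \<and>
            pos_mat (mprod as) \<and> spec_rad (mprod as) \<ge> R * (spec_rad (\<integral>a. a \<partial>\<mu>)) ^ K"
proof -
  have prob: "prob_space \<mu>"
    using C1_EN(2) by (intro prob_space_normalized_intensity[OF mu_sets mu_def]) auto
  have "AE a in \<mu>. nonneg_mat a"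
  proof (rule AE_normalized_intensity[OF mu_sets])
    have "open {a. \<not> nonneg_mat a}"
      using open_Compl[OF closed_nonneg_mat] by (simp add: Compl_eq)
    then show "{a. \<not> nonneg_mat a} \<in> sets borel"
      by (rule borel_open)
  qed (fact mu_def C1_G)+
  then interpret matrix_law \<mu>
    using prob mu_sets I1 by (intro matrix_law.intro matrix_law_axioms.intro)
  show ?thesis
    using ex_pos_mprod_spec_rad_ge[OF C2 rEA] by simp
qed

end
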